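(* Let $\pi\colon(X,T)\to(Y,T)$ be a factor map between topological dynamical systems with $(Y,T)$ minimal, and let $K\ge1$ be an integer. Suppose that for every $y\in Y$ there exists $u\in E(2^X,T)$ such that $\#\,u\circ\pi^{-1}(y)\le K$. Then $\pi$ is almost $k$-to-$1$ for some $k\le K$.
   Context: A topological dynamical system is a pair $(X,T)$ with $X$ a compact metric space and $T$ a homeomorphism. The hyperspace $(2^X,T)$ consists of the nonempty closed subsets of $X$ with the Hausdorff metric and the action $A\mapsto T(A)$. The Ellis semigroup $E(2^X,T)$ is the closure of $\{A\mapsto T^nA: n\in\mathbb{Z}\}$ in $(2^X)^{2^X}$ with the product topology, with composition as operation. For $u\in E(2^X,T)$ and $A\in 2^X$, $u\circ A\in 2^X$ denotes the image of the point $A$ under $u$; equivalently it is the set of $x\in X$ for which there are nets $x_\lambda\in A$ and $m_\lambda\in\mathbb{Z}$ with $T^{m_\lambda}x_\lambda\to x$ and $T^{m_\lambda}\to u$. A factor map $\pi$ is almost $k$-to-$1$ if $\#\pi^{-1}(y)=k$ for all $y$ in a residual subset of $Y$. *)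

theory Defs
  imports "HOL-Analysis.Analysis"
begin

definition int_iter :: "('a \<Rightarrow> 'a) \<Rightarrow> 'a set \<Rightarrow> int \<Rightarrow> 'a \<Rightarrow> 'a" where
  "int_iter T X n = (if 0 \<le> n then T ^^ nat n else (inv_into X T) ^^ nat (- n))"

definition hausdorff_dist :: "'a::metric_space set \<Rightarrow> 'a set \<Rightarrow> real" where
  "hausdorff_dist A B = max (SUP a\<in>A. infdist a B) (SUP b\<in>B. infdist b A)"

definition hyperspace :: "'a::metric_space set \<Rightarrow> 'a set set" where
  "hyperspace X = {A. A \<subseteq> X \<and> closed A \<and> A \<noteq> {}}"

definition hyper_open :: "'a::metric_space set \<Rightarrow> 'a set set \<Rightarrow> bool" where
  "hyper_open X U \<longleftrightarrow> U \<subseteq> hyperspace X \<and>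
     (\<forall>A\<in>U. \<exists>e>0. \<forall>B\<in>hyperspace X. hausdorff_dist A B < e \<longrightarrow> B \<in> U)"

lemma istopology_hyper_open: "istopology (hyper_open X)"
  unfolding istopology_def
proof (intro conjI allI impI)
  fix S T assume S: "hyper_open X S" and T: "hyper_open X T"
  show "hyper_open X (S \<inter> T)"
    unfolding hyper_open_def
  proof (intro conjI ballI)
    show "S \<inter> T \<subseteq> hyperspace X" using S unfolding hyper_open_def by blast
  next
    fix A assume "A \<in> S \<inter> T"
    then obtain e1 e2 where "e1 > 0" "\<forall>B\<in>hyperspace X. hausdorff_dist A B < e1 \<longrightarrow> B \<in> S"
        "e2 > 0" "\<forall>B\<in>hyperspace X. hausdorff_dist A B < e2 \<longrightarrow> B \<in> T"
      using S T unfolding hyper_open_def by blast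
    then show "\<exists>e>0. \<forall>B\<in>hyperspace X. hausdorff_dist A B < e \<longrightarrow> B \<in> S \<inter> T"
      by (intro exI[of _ "min e1 e2"]) auto
  qed
next
  fix K assume "\<forall>S\<in>K. hyper_open X S"
  then have K: "\<And>S. S \<in> K \<Longrightarrow> hyper_open X S" by blast
  show "hyper_open X (\<Union>K)"
    unfolding hyper_open_def
  proof (intro conjI ballI)
    show "\<Union>K \<subseteq> hyperspace X" using K unfolding hyper_open_def by blast
  next
    fix A assume "A \<in> \<Union>K"
    then obtain S where "S \<in> K" "A \<in> S" by blast
    then obtain e where "e > 0" "\<forall>B\<in>hyperspace X. hausdorff_dist A B < e \<longrightarrow> B \<in> S"
      using K unfolding hyper_open_def by blast
    then show "\<exists>e>0. \<forall>B\<in>hyperspace X. hausdorff_dist A B < e \<longrightarrow> B \<in> \<Union>K"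
      using \<open>S \<in> K\<close> by blast
  qed
qed

definition hyper_topology :: "'a::metric_space set \<Rightarrow> 'a set topology" where
  "hyper_topology X = topology (hyper_open X)"

definition hyper_ellis :: "('a::metric_space \<Rightarrow> 'a) \<Rightarrow> 'a set \<Rightarrow> ('a set \<Rightarrow> 'a set) set" where
  "hyper_ellis T X =
     (product_topology (\<lambda>_. hyper_topology X) (hyperspace X)) closure_of
       {restrict (\<lambda>A. int_iter T X n ` A) (hyperspace X) | n. True}"

definition minimal_system :: "'b::metric_space set \<Rightarrow> ('b \<Rightarrow> 'b) \<Rightarrow> bool" where
  "minimal_system Y S \<longleftrightarrow> Y \<noteq> {} \<and>
     (\<forall>Z. Z \<subseteq> Y \<and> closed Z \<and> Z \<noteq> {} \<and> S ` Z \<subseteq> Z \<longrightarrow> Z = Y)"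

definition factor_map ::
  "'a::metric_space set \<Rightarrow> ('a \<Rightarrow> 'a) \<Rightarrow> 'b::metric_space set \<Rightarrow> ('b \<Rightarrow> 'b) \<Rightarrow> ('a \<Rightarrow> 'b) \<Rightarrow> bool" where
  "factor_map X T Y S \<pi> \<longleftrightarrow> continuous_on X \<pi> \<and> \<pi> ` X = Y \<and> (\<forall>x\<in>X. \<pi> (T x) = S (\<pi> x))"

definition residual_in :: "'b::metric_space set \<Rightarrow> 'b set \<Rightarrow> bool" where
  "residual_in Y R \<longleftrightarrow> R \<subseteq> Y \<and> (\<exists>U :: nat \<Rightarrow> 'b set.
     (\<forall>n. openin (top_of_set Y) (U n) \<and> Y \<subseteq> closure (U n)) \<and> (\<Inter>n. U n) \<inter> Y \<subseteq> R)"

definition almost_k_to_1 ::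
  "'a::metric_space set \<Rightarrow> 'b::metric_space set \<Rightarrow> ('a \<Rightarrow> 'b) \<Rightarrow> nat \<Rightarrow> bool" where
  "almost_k_to_1 X Y \<pi> k \<longleftrightarrow> (\<exists>R. residual_in Y R \<and>
     (\<forall>y\<in>R. finite (X \<inter> \<pi> -` {y}) \<and> card (X \<inter> \<pi> -` {y}) = k))"

end

theory Submission
  imports Defs
begin

text \<open>Call m uniformly separated if for some c > 0 every fibre contains m points pairwise at least
  c apart. For u in E(2^X,T) and y in Y, every point of some T^n(\<pi>\<inverse>(y)) = \<pi>\<inverse>(S^n y) lies
  close to u(\<pi>\<inverse>(y)), so u(\<pi>\<inverse>(y)) inherits m well separated points and the hypothesis bounds
  every uniformly separated m by K. Let k be the largest one. As the fibres vary upper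
  semicontinuously, fibres over the closure of the set of y whose fibre has k + 1 points
  \<epsilon>-apart still have k + 1 points \<epsilon>/2-apart. If that closure had interior, minimality
  (every orbit enters a given open set within boundedly many steps) and uniform continuity of
  finitely many iterates of T would make k + 1 uniformly separated. Hence for \<epsilon> = 1/(n+1)
  the complements of these closures are dense and open, and over their intersection every
  fibre has exactly k points.\<close>

section \<open>Separated subsets of a metric space\<close>

definition contains_separated :: "'a::metric_space set \<Rightarrow> nat \<Rightarrow> real \<Rightarrow> bool" where
  "contains_separated A m c \<longleftrightarrow>
     (\<exists>D\<subseteq>A. finite D \<and> card D = m \<and> (\<forall>a\<in>D. \<forall>b\<in>D. a \<noteq> b \<longrightarrow> c \<le> dist a b))"

lemma contains_separated_0: "contains_separated A 0 c"
  unfolding contains_separated_def by (intro exI[of _ "{}"]) auto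

lemma contains_separated_mono:
  assumes "contains_separated A m c" "A \<subseteq> A'" "c' \<le> c"
  shows "contains_separated A' m c'"
proof -
  obtain D where "D \<subseteq> A" "finite D" "card D = m" "\<forall>a\<in>D. \<forall>b\<in>D. a \<noteq> b \<longrightarrow> c \<le> dist a b"
    using assms(1) unfolding contains_separated_def by blast
  then show ?thesis
    unfolding contains_separated_def using assms(2,3) by (intro exI[of _ D]) force
qed

lemma contains_separated_card_le:
  assumes "contains_separated A m c" "finite A"
  shows "m \<le> card A"
  using assms unfolding contains_separated_def by (metis card_mono)

lemma finite_subset_contains_separated:
  assumes "finite D" "D \<subseteq> A"
  shows "\<exists>c>0. contains_separated A (card D) c"
proof -
  define E where "E = (\<lambda>(a, b). dist a b) ` {(a, b) \<in> D \<times> D. a \<noteq> b}"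
  have "finite E"
    unfolding E_def by (rule finite_imageI, rule finite_subset[of _ "D \<times> D"]) (use assms(1) in auto)
  define c where "c = Min (insert 1 E)"
  have "c > 0" unfolding c_def using \<open>finite E\<close> by (auto simp: E_def)
  moreover have "c \<le> dist a b" if "a \<in> D" "b \<in> D" "a \<noteq> b" for a b
    unfolding c_def using \<open>finite E\<close> that by (intro Min_le) (auto simp: E_def)
  ultimately show ?thesis
    using assms unfolding contains_separated_def by blast
qed

lemma finite_card_le_if_not_contains_separated:
  assumes "\<forall>c>0. \<not> contains_separated A (Suc k) c"
  shows "finite A \<and> card A \<le> k"
proof (rule ccontr)
  assume "\<not> (finite A \<and> card A \<le> k)"
  then obtain D where "D \<subseteq> A" "finite D" "card D = Suc k"
    by (metis infinite_arbitrarily_large not_less_eq_eq obtain_subset_with_card_n)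
  then show False
    using assms finite_subset_contains_separated by metis
qed

lemma contains_separated_near:
  assumes "contains_separated A m c" "\<forall>x\<in>A. \<exists>z\<in>B. dist x z < c/4"
  shows "contains_separated B m (c/2)"
proof -
  obtain D where D: "D \<subseteq> A" "finite D" "card D = m" "\<forall>a\<in>D. \<forall>b\<in>D. a \<noteq> b \<longrightarrow> c \<le> dist a b"
    using assms(1) unfolding contains_separated_def by blast
  have "\<forall>x\<in>D. \<exists>z. z \<in> B \<and> dist x z < c/4"
    using assms(2) D(1) by blast
  then obtain q where q: "\<And>x. x \<in> D \<Longrightarrow> q x \<in> B \<and> dist x (q x) < c/4"
    by (metis bchoice)
  have far: "c/2 \<le> dist (q a) (q b)" if "a \<in> D" "b \<in> D" "a \<noteq> b" for a b
  proof -
    have "dist a b \<le> dist a (q a) + dist (q a) (q b) + dist (q b) b"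
      using dist_triangle[of a b "q a"] dist_triangle[of "q a" b "q b"] by linarith
    then show ?thesis
      using D(4) q[of a] q[of b] that dist_commute[of b "q b"] by fastforce
  qed
  have "inj_on q D"
  proof (rule inj_onI, rule ccontr)
    fix a b assume "a \<in> D" "b \<in> D" "q a = q b" "a \<noteq> b"
    then have "c \<le> 0"
      using far[of a b] by simp
    then show False
      using q[OF \<open>a \<in> D\<close>] zero_le_dist[of a "q a"] by linarith
  qed
  then have "q ` D \<subseteq> B \<and> finite (q ` D) \<and> card (q ` D) = m"
    using q D by (auto simp: card_image)
  moreover have "\<forall>a'\<in>q ` D. \<forall>b'\<in>q ` D. a' \<noteq> b' \<longrightarrow> c/2 \<le> dist a' b'"
    using far by blast
  ultimately show ?thesis
    unfolding contains_separated_def by blast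
qed

lemma contains_separated_preimage:
  assumes "contains_separated (h ` A) m c"
    and "\<forall>x\<in>A. \<forall>x'\<in>A. dist x' x < d \<longrightarrow> dist (h x') (h x) < c"
  shows "contains_separated A m d"
proof -
  obtain D where D: "D \<subseteq> h ` A" "finite D" "card D = m" "\<forall>a\<in>D. \<forall>b\<in>D. a \<noteq> b \<longrightarrow> c \<le> dist a b"
    using assms(1) unfolding contains_separated_def by blast
  let ?D' = "inv_into A h ` D"
  have "?D' \<subseteq> A" "finite ?D'" "card ?D' = m"
    using D by (auto simp: card_image inj_on_inv_into inv_into_into)
  moreover have "d \<le> dist (inv_into A h a) (inv_into A h b)"
    if "a \<in> D" "b \<in> D" "inv_into A h a \<noteq> inv_into A h b" for a b
  proof (rule ccontr)
    assume "\<not> ?thesis"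
    then have "dist a b < c"
      using assms(2) that(1,2) D(1) by (metis f_inv_into_f inv_into_into not_le subsetD)
    then show False
      using D(4) that by force
  qed
  ultimately show ?thesis
    unfolding contains_separated_def by blast
qed

section \<open>Iterates, fibres and minimal systems\<close>

lemma homeomorphism_funpow:
  assumes "homeomorphism X X f g"
  shows "homeomorphism X X (f ^^ n) (g ^^ n)"
proof (induction n)
  case 0
  then show ?case by (simp add: homeomorphism_ident id_def)
next
  case (Suc n)
  from homeomorphism_compose[OF Suc assms] show ?case
    unfolding funpow.simps(2)[of _ f] funpow_Suc_right[of _ g] .
qed

lemma homeomorphism_int_iter:
  assumes "homeomorphism X X T (inv_into X T)"
  shows "homeomorphism X X (int_iter T X n) (int_iter T X (- n))"
proof -
  consider "n = 0" | "n > 0" | "n < 0"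
    by linarith
  then show ?thesis
  proof cases
    case 1
    then show ?thesis
      using homeomorphism_ident by (simp add: int_iter_def id_def)
  next
    case 2
    then have "int_iter T X n = T ^^ nat n" "int_iter T X (- n) = inv_into X T ^^ nat n"
      by (simp_all add: int_iter_def)
    then show ?thesis
      using homeomorphism_funpow[OF assms] by simp
  next
    case 3
    then have "int_iter T X n = inv_into X T ^^ nat (- n)" "int_iter T X (- n) = T ^^ nat (- n)"
      by (simp_all add: int_iter_def)
    then show ?thesis
      using homeomorphism_symD[OF homeomorphism_funpow[OF assms]] by simp
  qed
qed

lemma semiconj_funpow:
  assumes "f ` X \<subseteq> X" "\<forall>x\<in>X. \<pi> (f x) = g (\<pi> x)" "x \<in> X"
  shows "\<pi> ((f ^^ n) x) = (g ^^ n) (\<pi> x)"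
  using assms(3)
proof (induction n arbitrary: x)
  case (Suc n)
  then have "f x \<in> X" using assms(1) by blast
  then show ?case
    using Suc assms(2) by (simp only: funpow_Suc_right o_apply)
qed simp

lemma image_fibre_semiconj:
  assumes "homeomorphism X X h h'" "homeomorphism Y Y g g'"
    and "\<pi> ` X \<subseteq> Y" "\<forall>x\<in>X. \<pi> (h x) = g (\<pi> x)" "y \<in> Y"
  shows "h ` (X \<inter> \<pi> -` {y}) = X \<inter> \<pi> -` {g y}"
proof
  show "h ` (X \<inter> \<pi> -` {y}) \<subseteq> X \<inter> \<pi> -` {g y}"
    using assms(1,4) by (auto simp: homeomorphism_def)
  show "X \<inter> \<pi> -` {g y} \<subseteq> h ` (X \<inter> \<pi> -` {y})"
  proof
    fix x' assume x': "x' \<in> X \<inter> \<pi> -` {g y}"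
    define x where "x = h' x'"
    have x: "x \<in> X" "h x = x'"
      using assms(1) x' unfolding x_def homeomorphism_def by auto
    have "\<pi> x = g' (g (\<pi> x))"
      using assms(2,3) x(1) by (auto simp: homeomorphism_def)
    also have "\<dots> = y"
      using assms(2,4,5) x x' by (auto simp: homeomorphism_def)
    finally show "x' \<in> h ` (X \<inter> \<pi> -` {y})"
      using x by blast
  qed
qed

lemma fibres_upper_semicontinuous:
  fixes \<pi> :: "'a::metric_space \<Rightarrow> 'b::metric_space"
  assumes "compact X" "continuous_on X \<pi>" "e > 0"
  shows "\<exists>\<eta>>0. \<forall>x\<in>X. dist (\<pi> x) y < \<eta> \<longrightarrow> (\<exists>z\<in>X \<inter> \<pi> -` {y}. dist x z < e)"
proof -
  define K where "K = X \<inter> (\<Inter>z\<in>X \<inter> \<pi> -` {y}. {x. e \<le> dist x z})"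
  have "closed (\<Inter>z\<in>X \<inter> \<pi> -` {y}. {x. e \<le> dist x z})"
    by (intro closed_INT ballI closed_Collect_le continuous_intros)
  then have "compact K"
    unfolding K_def using assms(1) by (intro compact_Int_closed)
  then have "compact (\<pi> ` K)"
    using assms(2) unfolding K_def by (blast intro: compact_continuous_image continuous_on_subset)
  moreover have "y \<notin> \<pi> ` K"
    using assms(3) unfolding K_def by force
  ultimately obtain \<eta> where "\<eta> > 0" "ball y \<eta> \<subseteq> - \<pi> ` K"
    by (metis compact_imp_closed open_Compl open_contains_ball ComplI)
  then have "\<exists>z\<in>X \<inter> \<pi> -` {y}. dist x z < e" if "x \<in> X" "dist (\<pi> x) y < \<eta>" for x
    using that unfolding K_def by (force simp: dist_commute)
  then show ?thesis
    using \<open>\<eta> > 0\<close> by blast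
qed

lemma finite_uniformly_equicontinuous:
  assumes "finite N" "\<And>n. n \<in> N \<Longrightarrow> uniformly_continuous_on X (f n)" "e > 0"
  shows "\<exists>d>0. \<forall>n\<in>N. \<forall>x\<in>X. \<forall>x'\<in>X. dist x' x < d \<longrightarrow> dist (f n x') (f n x) < e"
  using assms
proof (induction N rule: finite_induct)
  case empty
  show ?case
    by (intro exI[of _ 1]) simp
next
  case (insert n N)
  obtain d1 where "d1 > 0" "\<forall>x\<in>X. \<forall>x'\<in>X. dist x' x < d1 \<longrightarrow> dist (f n x') (f n x) < e"
    using insert.prems unfolding uniformly_continuous_on_def by blast
  moreover obtain d2 where "d2 > 0"
    "\<forall>m\<in>N. \<forall>x\<in>X. \<forall>x'\<in>X. dist x' x < d2 \<longrightarrow> dist (f m x') (f m x) < e"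
    using insert.IH insert.prems by blast
  ultimately show ?case
    by (intro exI[of _ "min d1 d2"]) auto
qed

lemma openin_funpow_preimage:
  assumes "continuous_on Y S" "S ` Y \<subseteq> Y" "openin (top_of_set Y) V"
  shows "openin (top_of_set Y) {y \<in> Y. (S ^^ n) y \<in> V}"
proof (induction n)
  case 0
  have "V \<subseteq> Y"
    using openin_subset[OF assms(3)] by simp
  then have "{y \<in> Y. (S ^^ 0) y \<in> V} = V"
    by auto
  then show ?case
    using assms(3) by simp
next
  case (Suc n)
  have "{y \<in> Y. (S ^^ Suc n) y \<in> V} = Y \<inter> S -` {y \<in> Y. (S ^^ n) y \<in> V}"
    using assms(2) by (auto simp: funpow_swap1)
  also have "openin (top_of_set Y) \<dots>"
    using assms(1,2) Suc by (intro continuous_openin_preimage) auto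
  finally show ?case .
qed

text \<open>The points whose forward orbit avoids V form a closed invariant proper subset.\<close>
lemma minimal_system_orbit_enters:
  assumes "minimal_system Y S" "compact Y" "continuous_on Y S" "S ` Y \<subseteq> Y"
    and "openin (top_of_set Y) V" "V \<noteq> {}" "y \<in> Y"
  shows "\<exists>n. (S ^^ n) y \<in> V"
proof -
  define Z where "Z = Y - (\<Union>n. {y \<in> Y. (S ^^ n) y \<in> V})"
  have "openin (top_of_set Y) (\<Union>n. {y \<in> Y. (S ^^ n) y \<in> V})"
    using openin_funpow_preimage[OF assms(3,4,5)] by blast
  from closedin_diff[OF closedin_topspace this] have "closedin (top_of_set Y) Z"
    unfolding Z_def by simp
  then have "closed Z"
    using closedin_closed_trans compact_imp_closed assms(2) by blast
  moreover have "S ` Z \<subseteq> Z"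
  proof
    fix z assume "z \<in> S ` Z"
    then obtain y where y: "y \<in> Z" "z = S y"
      by blast
    have "(S ^^ n) (S y) \<notin> V" for n
    proof -
      have "(S ^^ Suc n) y \<notin> V"
        using y(1) unfolding Z_def by blast
      then show ?thesis
        by (simp add: funpow_swap1)
    qed
    then show "z \<in> Z"
      using y assms(4) unfolding Z_def by auto
  qed
  moreover have "Z \<noteq> Y"
  proof -
    obtain v where "v \<in> V"
      using assms(6) by blast
    moreover have "V \<subseteq> Y"
      using openin_subset[OF assms(5)] by simp
    ultimately have "v \<in> Y - Z"
      unfolding Z_def by (auto intro: exI[of _ 0])
    then show ?thesis
      by blast
  qed
  ultimately have "Z = {}"
    using assms(1) unfolding minimal_system_def Z_def by blast
  then show ?thesis
    using assms(7) unfolding Z_def by blast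
qed

lemma minimal_system_finite_return:
  assumes "minimal_system Y S" "compact Y" "continuous_on Y S" "S ` Y \<subseteq> Y"
    and "openin (top_of_set Y) V" "V \<noteq> {}"
  shows "\<exists>N. finite N \<and> (\<forall>y\<in>Y. \<exists>n\<in>N. (S ^^ n) y \<in> V)"
proof -
  have "compactin (top_of_set Y) Y"
    using assms(2) by (simp add: compactin_subtopology)
  moreover have "\<forall>U\<in>range (\<lambda>n. {y \<in> Y. (S ^^ n) y \<in> V}). openin (top_of_set Y) U"
    using openin_funpow_preimage[OF assms(3,4,5)] by blast
  moreover have "Y \<subseteq> \<Union>(range (\<lambda>n. {y \<in> Y. (S ^^ n) y \<in> V}))"
    using minimal_system_orbit_enters[OF assms] by blast
  ultimately obtain F where "finite F" "F \<subseteq> range (\<lambda>n. {y \<in> Y. (S ^^ n) y \<in> V})" "Y \<subseteq> \<Union>F"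
    unfolding compactin_def by meson
  then obtain N where "finite N" "F = (\<lambda>n. {y \<in> Y. (S ^^ n) y \<in> V}) ` N"
    by (meson finite_subset_image)
  then show ?thesis
    using \<open>Y \<subseteq> \<Union>F\<close> by blast
qed

section \<open>The hyperspace and its Ellis semigroup\<close>

lemma openin_hyper_topology: "openin (hyper_topology X) = hyper_open X"
  by (simp add: hyper_topology_def istopology_hyper_open)

lemma topspace_hyper_topology: "topspace (hyper_topology X) = hyperspace X"
proof -
  have "hyper_open X (hyperspace X)"
    unfolding hyper_open_def by (auto intro: exI[of _ 1])
  then show ?thesis
    unfolding topspace_def openin_hyper_topology hyper_open_def by blast
qed

lemma infdist_le_hausdorff_dist:
  assumes "bounded X" "A \<subseteq> X" "B \<subseteq> X" "A \<noteq> {}" "x \<in> B"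
  shows "infdist x A \<le> hausdorff_dist A B"
proof -
  obtain a where "a \<in> A"
    using assms(4) by blast
  have "infdist b A \<le> diameter X" if "b \<in> B" for b
    using infdist_le[OF \<open>a \<in> A\<close>, of b] diameter_bounded_bound[OF assms(1), of b a]
      \<open>a \<in> A\<close> assms(2,3) that by force
  then have "infdist x A \<le> (SUP b\<in>B. infdist b A)"
    using assms(5) by (intro cSUP_upper bdd_aboveI2) auto
  then show ?thesis
    unfolding hausdorff_dist_def by linarith
qed

lemma infdist_less_imp_dist_less:
  assumes "A \<noteq> {}" "infdist x A < e"
  shows "\<exists>a\<in>A. dist x a < e"
  using assms by (simp add: infdist_notempty cINF_less_iff)

lemma infdist_le_infdist_add:
  assumes "B \<noteq> {}" "\<forall>x\<in>B. infdist x C \<le> r"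
  shows "infdist y C \<le> infdist y B + r"
proof -
  have "infdist y C - r \<le> dist y x" if "x \<in> B" for x
    using infdist_triangle[of y C x] assms(2) that by (fastforce simp: dist_commute)
  then have "infdist y C - r \<le> infdist y B"
    unfolding infdist_notempty[OF assms(1)] using assms(1) by (intro cINF_greatest)
  then show ?thesis
    by linarith
qed

lemma hyper_open_infdist_less:
  assumes "bounded X"
  shows "hyper_open X {B \<in> hyperspace X. \<exists>r<e. \<forall>x\<in>B. infdist x C \<le> r}"
  unfolding hyper_open_def
proof (intro conjI ballI)
  fix B assume "B \<in> {B \<in> hyperspace X. \<exists>r<e. \<forall>x\<in>B. infdist x C \<le> r}"
  then obtain r where B: "B \<in> hyperspace X" "r < e" "\<forall>x\<in>B. infdist x C \<le> r"
    by blast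
  show "\<exists>\<delta>>0. \<forall>B'\<in>hyperspace X. hausdorff_dist B B' < \<delta> \<longrightarrow>
          B' \<in> {B \<in> hyperspace X. \<exists>r<e. \<forall>x\<in>B. infdist x C \<le> r}"
  proof (intro exI[of _ "e - r"] conjI ballI impI)
    fix B' assume B': "B' \<in> hyperspace X" "hausdorff_dist B B' < e - r"
    have "infdist x' C \<le> hausdorff_dist B B' + r" if "x' \<in> B'" for x'
      using infdist_le_infdist_add[of B C r x'] infdist_le_hausdorff_dist[OF assms, of B B' x']
        B B' that by (force simp: hyperspace_def)
    then show "B' \<in> {B \<in> hyperspace X. \<exists>r<e. \<forall>x\<in>B. infdist x C \<le> r}"
      using B' by (intro CollectI conjI exI[of _ "hausdorff_dist B B' + r"]) auto
  qed (use B in auto)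
qed auto

lemma hyper_ellis_iterate_near:
  assumes "bounded X" "u \<in> hyper_ellis T X" "A \<in> hyperspace X" "e > 0"
  shows "\<exists>n. \<forall>x\<in>int_iter T X n ` A. \<exists>b\<in>u A. dist x b < e"
proof -
  let ?P = "product_topology (\<lambda>_. hyper_topology X) (hyperspace X)"
  let ?O = "{B \<in> hyperspace X. \<exists>r<e. \<forall>x\<in>B. infdist x (u A) \<le> r}"
  define shifts where "shifts = {restrict (\<lambda>A. int_iter T X n ` A) (hyperspace X) | n. True}"
  have u: "u \<in> ?P closure_of shifts"
    using assms(2) unfolding hyper_ellis_def shifts_def .
  have uP: "u \<in> topspace ?P"
    using closure_of_subset_topspace u by (rule subsetD)
  then have uA: "u A \<in> hyperspace X"
    using assms(3) by (auto simp: topspace_hyper_topology)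
  define W where "W = {g \<in> topspace ?P. g A \<in> ?O}"
  have "openin ?P W"
    unfolding W_def using hyper_open_infdist_less[OF assms(1)]
    by (intro openin_continuous_map_preimage[OF continuous_map_product_projection[OF assms(3)]])
      (simp add: openin_hyper_topology)
  moreover have "u \<in> W"
    unfolding W_def using uP uA assms(4) by (auto intro: exI[of _ 0])
  ultimately obtain g where "g \<in> shifts" "g \<in> W"
    using u unfolding in_closure_of by blast
  then obtain n where "g = restrict (\<lambda>A. int_iter T X n ` A) (hyperspace X)"
    unfolding shifts_def by blast
  then have "int_iter T X n ` A \<in> ?O"
    using \<open>g \<in> W\<close> assms(3) unfolding W_def by simp
  then obtain r where r: "r < e" "\<forall>x\<in>int_iter T X n ` A. infdist x (u A) \<le> r"
    by blast
  have "u A \<noteq> {}"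
    using uA by (simp add: hyperspace_def)
  then show ?thesis
    using r infdist_less_imp_dist_less by (metis order.strict_trans1)
qed

section \<open>Fibres of a factor map\<close>

locale compact_factor =
  fixes X :: "'a::metric_space set" and T :: "'a \<Rightarrow> 'a"
    and Y :: "'b::metric_space set" and S :: "'b \<Rightarrow> 'b"
    and \<pi> :: "'a \<Rightarrow> 'b"
  assumes compact_X: "compact X" and compact_Y: "compact Y"
    and homeo_T: "homeomorphism X X T (inv_into X T)"
    and homeo_S: "homeomorphism Y Y S (inv_into Y S)"
    and factor: "factor_map X T Y S \<pi>"
begin

abbreviation fibre :: "'b \<Rightarrow> 'a set" where
  "fibre y \<equiv> X \<inter> \<pi> -` {y}"

definition uniformly_separated :: "nat \<Rightarrow> bool" where
  "uniformly_separated m \<longleftrightarrow> (\<exists>c>0. \<forall>y\<in>Y. contains_separated (fibre y) m c)"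

lemma \<pi>_image_X: "\<pi> ` X = Y" and continuous_\<pi>: "continuous_on X \<pi>"
  using factor unfolding factor_map_def by auto

lemma fibre_in_hyperspace:
  assumes "y \<in> Y"
  shows "fibre y \<in> hyperspace X"
proof -
  have "fibre y = {x \<in> X. \<pi> x = y}"
    by blast
  then have "closed (fibre y)"
    using continuous_closed_preimage_constant[OF continuous_\<pi> compact_imp_closed[OF compact_X]]
    by simp
  moreover have "fibre y \<noteq> {}"
    using assms \<pi>_image_X by blast
  ultimately show ?thesis
    unfolding hyperspace_def by blast
qed

lemma semiconj_inv_into:
  assumes "x \<in> X"
  shows "\<pi> (inv_into X T x) = inv_into Y S (\<pi> x)"
proof -
  let ?x' = "inv_into X T x"
  have "?x' \<in> X" "T ?x' = x"
    using homeomorphism_image2[OF homeo_T] homeomorphism_apply2[OF homeo_T] assms by auto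
  then have "\<pi> x = S (\<pi> ?x')" "\<pi> ?x' \<in> Y"
    using factor \<pi>_image_X unfolding factor_map_def by auto
  then show ?thesis
    using homeomorphism_apply1[OF homeo_S] by simp
qed

lemma semiconj_int_iter:
  assumes "x \<in> X"
  shows "\<pi> (int_iter T X n x) = int_iter S Y n (\<pi> x)"
proof (cases "0 \<le> n")
  case True
  have "T ` X \<subseteq> X" "\<forall>x\<in>X. \<pi> (T x) = S (\<pi> x)"
    using homeomorphism_image1[OF homeo_T] factor unfolding factor_map_def by auto
  from semiconj_funpow[OF this assms] show ?thesis
    using True by (simp add: int_iter_def)
next
  case False
  have "inv_into X T ` X \<subseteq> X" "\<forall>x\<in>X. \<pi> (inv_into X T x) = inv_into Y S (\<pi> x)"
    using homeomorphism_image2[OF homeo_T] semiconj_inv_into by auto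
  from semiconj_funpow[OF this assms] show ?thesis
    using False by (simp add: int_iter_def)
qed

lemma image_fibre_int_iter:
  assumes "y \<in> Y"
  shows "int_iter T X n ` fibre y = fibre (int_iter S Y n y)" "int_iter S Y n y \<in> Y"
proof -
  show "int_iter T X n ` fibre y = fibre (int_iter S Y n y)"
    using image_fibre_semiconj[OF homeomorphism_int_iter[OF homeo_T] homeomorphism_int_iter[OF homeo_S]]
      \<pi>_image_X semiconj_int_iter assms by blast
  show "int_iter S Y n y \<in> Y"
    using homeomorphism_image1[OF homeomorphism_int_iter[OF homeo_S, of n]] assms by blast
qed

lemma uniformly_separated_le_card_ellis_image:
  assumes "uniformly_separated m" "y \<in> Y" "u \<in> hyper_ellis T X" "finite (u (fibre y))"
  shows "m \<le> card (u (fibre y))"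
proof -
  obtain c where c: "c > 0" "\<forall>y\<in>Y. contains_separated (fibre y) m c"
    using assms(1) unfolding uniformly_separated_def by blast
  obtain n where n: "\<forall>x\<in>int_iter T X n ` fibre y. \<exists>b\<in>u (fibre y). dist x b < c/4"
    using hyper_ellis_iterate_near[OF compact_imp_bounded[OF compact_X] assms(3)
        fibre_in_hyperspace[OF assms(2)], of "c/4"] c(1) by auto
  have "contains_separated (int_iter T X n ` fibre y) m c"
    using c(2) image_fibre_int_iter[OF assms(2)] by simp
  then have "contains_separated (u (fibre y)) m (c/2)"
    using n by (rule contains_separated_near)
  then show ?thesis
    using assms(4) by (rule contains_separated_card_le)
qed

lemma contains_separated_fibre_closure:
  assumes "c > 0" "y \<in> closure {y. contains_separated (fibre y) m c}"
  shows "contains_separated (fibre y) m (c/2)"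
proof -
  obtain \<eta> where "\<eta> > 0" and \<eta>: "\<forall>x\<in>X. dist (\<pi> x) y < \<eta> \<longrightarrow> (\<exists>z\<in>fibre y. dist x z < c/4)"
    using fibres_upper_semicontinuous[OF compact_X continuous_\<pi>, of "c/4" y] assms(1) by auto
  obtain y' where "contains_separated (fibre y') m c" "dist y' y < \<eta>"
    using assms(2) \<open>\<eta> > 0\<close> unfolding closure_approachable by auto
  moreover have "\<forall>x\<in>fibre y'. \<exists>z\<in>fibre y. dist x z < c/4"
    using \<eta> \<open>dist y' y < \<eta>\<close> by auto
  ultimately show ?thesis
    using contains_separated_near by blast
qed

lemma uniformly_separated_if_separated_on_open:
  assumes "minimal_system Y S" "openin (top_of_set Y) V" "V \<noteq> {}"
    and "\<forall>v\<in>V. contains_separated (fibre v) m c" "c > 0"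
  shows "uniformly_separated m"
proof -
  have S: "continuous_on Y S" "S ` Y \<subseteq> Y"
    using homeo_S unfolding homeomorphism_def by auto
  obtain N where "finite N" and N: "\<forall>y\<in>Y. \<exists>n\<in>N. (S ^^ n) y \<in> V"
    using minimal_system_finite_return[OF assms(1) compact_Y S assms(2,3)] by blast
  have "uniformly_continuous_on X (T ^^ n)" for n
    using homeomorphism_cont1[OF homeomorphism_funpow[OF homeo_T]] compact_X
    by (rule compact_uniformly_continuous)
  then obtain d where "d > 0"
    and d: "\<forall>n\<in>N. \<forall>x\<in>X. \<forall>x'\<in>X. dist x' x < d \<longrightarrow> dist ((T ^^ n) x') ((T ^^ n) x) < c"
    using finite_uniformly_equicontinuous[OF \<open>finite N\<close> _ assms(5), of X "\<lambda>n. T ^^ n"] by blast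
  have "contains_separated (fibre y) m d" if y: "y \<in> Y" for y
  proof -
    obtain n where n: "n \<in> N" "(S ^^ n) y \<in> V"
      using N y by blast
    have "int_iter T X (int n) = T ^^ n" "int_iter S Y (int n) = S ^^ n"
      by (simp_all add: int_iter_def)
    then have "(T ^^ n) ` fibre y = fibre ((S ^^ n) y)"
      using image_fibre_int_iter(1)[OF y, of "int n"] by simp
    moreover have "contains_separated (fibre ((S ^^ n) y)) m c"
      using assms(4) n(2) by blast
    ultimately have "contains_separated ((T ^^ n) ` fibre y) m c"
      by simp
    then show ?thesis
    proof (rule contains_separated_preimage)
      show "\<forall>x\<in>fibre y. \<forall>x'\<in>fibre y. dist x' x < d \<longrightarrow> dist ((T ^^ n) x') ((T ^^ n) x) < c"
        using d n(1) by blast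
    qed
  qed
  then show ?thesis
    unfolding uniformly_separated_def using \<open>d > 0\<close> by blast
qed

lemma dense_complement_closure_separated:
  assumes "minimal_system Y S" "\<not> uniformly_separated m" "c > 0"
  shows "Y \<subseteq> closure (Y - closure {y. contains_separated (fibre y) m c})"
proof
  fix y assume "y \<in> Y"
  let ?F = "{y. contains_separated (fibre y) m c}"
  show "y \<in> closure (Y - closure ?F)"
  proof (rule ccontr)
    assume "y \<notin> closure (Y - closure ?F)"
    then obtain e where "e > 0" and e: "\<forall>z\<in>Y - closure ?F. e \<le> dist z y"
      unfolding closure_approachable by (auto simp: not_less)
    let ?V = "Y \<inter> ball y e"
    have "openin (top_of_set Y) ?V" "?V \<noteq> {}"
      using \<open>y \<in> Y\<close> \<open>e > 0\<close> by (auto intro: openin_open_Int)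
    moreover have "\<forall>v\<in>?V. contains_separated (fibre v) m (c/2)"
    proof
      fix v assume v: "v \<in> ?V"
      have "v \<in> closure ?F"
      proof (rule ccontr)
        assume "v \<notin> closure ?F"
        then have "e \<le> dist v y"
          using e v by blast
        then show False
          using v by (simp add: dist_commute)
      qed
      then show "contains_separated (fibre v) m (c/2)"
        using contains_separated_fibre_closure assms(3) by blast
    qed
    ultimately have "uniformly_separated m"
      using uniformly_separated_if_separated_on_open assms(1,3) by (meson half_gt_zero)
    then show False
      using assms(2) by blast
  qed
qed

lemma almost_k_to_1_if_maximal:
  assumes "minimal_system Y S" "uniformly_separated k" "\<not> uniformly_separated (Suc k)"
  shows "almost_k_to_1 X Y \<pi> k"
proof -
  define U where "U n = Y - closure {y. contains_separated (fibre y) (Suc k) (inverse (Suc n))}"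
    for n
  have U_open: "openin (top_of_set Y) (U n)" for n
    unfolding U_def Diff_eq by (intro openin_open_Int open_Compl closed_closure)
  have U_dense: "Y \<subseteq> closure (U n)" for n
    unfolding U_def using dense_complement_closure_separated[OF assms(1,3)] by simp
  have "finite (fibre y) \<and> card (fibre y) = k" if y: "y \<in> Y" "\<forall>n. y \<in> U n" for y
  proof -
    have "\<forall>c>0. \<not> contains_separated (fibre y) (Suc k) c"
    proof (intro allI impI notI)
      fix c :: real assume "c > 0" and sep: "contains_separated (fibre y) (Suc k) c"
      obtain n where "inverse (Suc n) < c"
        using reals_Archimedean[OF \<open>c > 0\<close>] by blast
      with sep have "y \<in> {y. contains_separated (fibre y) (Suc k) (inverse (Suc n))}"
        using contains_separated_mono[OF _ order_refl less_imp_le] by simp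
      then have "y \<in> closure {y. contains_separated (fibre y) (Suc k) (inverse (Suc n))}"
        by (rule closure_subset[THEN subsetD])
      then have "y \<notin> U n"
        unfolding U_def by blast
      then show False
        using y(2) by blast
    qed
    then have fin: "finite (fibre y)" and "card (fibre y) \<le> k"
      using finite_card_le_if_not_contains_separated by auto
    obtain c where "contains_separated (fibre y) k c"
      using assms(2) y(1) unfolding uniformly_separated_def by blast
    then have "k \<le> card (fibre y)"
      using fin by (rule contains_separated_card_le)
    with fin \<open>card (fibre y) \<le> k\<close> show ?thesis
      by simp
  qed
  then have "residual_in Y {y \<in> Y. finite (fibre y) \<and> card (fibre y) = k}"
    unfolding residual_in_def using U_open U_dense by (intro conjI exI[of _ U]) auto
  then show ?thesis
    unfolding almost_k_to_1_def by blast
qed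

end

theorem lemma5p2:
  fixes X :: "'a::metric_space set" and T :: "'a \<Rightarrow> 'a"
    and Y :: "'b::metric_space set" and S :: "'b \<Rightarrow> 'b"
    and \<pi> :: "'a \<Rightarrow> 'b" and K :: nat
  assumes "compact X" and "homeomorphism X X T (inv_into X T)"
    and "compact Y" and "homeomorphism Y Y S (inv_into Y S)"
    and "factor_map X T Y S \<pi>"
    and "minimal_system Y S"
    and "K \<ge> 1"
    and "\<forall>y\<in>Y. \<exists>u\<in>hyper_ellis T X.
           finite (u (X \<inter> \<pi> -` {y})) \<and> card (u (X \<inter> \<pi> -` {y})) \<le> K"
  shows "\<exists>k\<le>K. almost_k_to_1 X Y \<pi> k"
proof -
  interpret compact_factor X T Y S \<pi>
    using assms(1-5) by unfold_locales
  obtain y0 where "y0 \<in> Y"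
    using assms(6) unfolding minimal_system_def by blast
  have le_K: "m \<le> K" if "uniformly_separated m" for m
    using assms(8) \<open>y0 \<in> Y\<close> uniformly_separated_le_card_ellis_image[OF that \<open>y0 \<in> Y\<close>]
    by (meson order.trans)
  let ?M = "{m. uniformly_separated m}"
  have "finite ?M"
    using le_K by (auto intro: finite_subset[of _ "{..K}"])
  have "uniformly_separated 0"
    unfolding uniformly_separated_def using contains_separated_0 by (intro exI[of _ 1]) auto
  define k where "k = Max ?M"
  have "uniformly_separated k" "\<not> uniformly_separated (Suc k)" "k \<le> K"
    using Max_in[OF \<open>finite ?M\<close>] Max_ge[OF \<open>finite ?M\<close>, of "Suc k"] le_K
      \<open>uniformly_separated 0\<close>
    unfolding k_def by fastforce+
  then show ?thesis
    using almost_k_to_1_if_maximal[OF assms(6)] by blast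
qed

end
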